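(* Let $\models$ be an intersective mixed consequence truth-relation on a finite set $V$ of truth values (constant expressive setting). If $\models$ admits a G-negation, then every minimal representation $\models_{\mathcal{D}_p^1,\mathcal{D}_c^1}\cap\dots\cap\models_{\mathcal{D}_p^K,\mathcal{D}_c^K}$ of $\models$ satisfies: (N1) for $i\neq j$ there is no inclusion $\mathcal{D}_p^i\subseteq\mathcal{D}_p^j$ nor $\mathcal{D}_c^i\subseteq\mathcal{D}_c^j$; (N2) for all $i,j$: if $\mathcal{D}_p^i\subseteq\mathcal{D}_c^j$ then $\mathcal{D}_p^j\subseteq\mathcal{D}_c^i$, and if $\mathcal{D}_c^j\subseteq\mathcal{D}_p^i$ then $\mathcal{D}_c^i\subseteq\mathcal{D}_p^j$.
   Context: $V$ contains distinct $1,0$; sets of designated values: $\mathcal{D}\subseteq V$, $1\in\mathcal{D}$, $0\notin\mathcal{D}$. $\gamma\models_{\mathcal{D}_p,\mathcal{D}_c}\delta$ iff ($\gamma\subseteq\mathcal{D}_p\Rightarrow\delta\cap\mathcal{D}_c\neq\emptyset$). An intersective mixed truth-relation is a finite intersection of such; a representation is a list of mixed relations whose intersection it is, minimal if of least possible length. Semantics: valuations mapping atoms to $V$, connectives interpreted by fixed truth functions, extended compositionally, every assignment to finitely many distinct atoms realized; constant expressive: every value is the constant value of some formula. $\Gamma\vdash\Delta$ iff $v(\Gamma)\models v(\Delta)$ for all $v$. A G-negation is a unary connective $\neg$ (interpreted by some truth function) with, for all $\Gamma,\Delta,A$: $\Gamma\cup\{\neg A\}\vdash\Delta$ iff $\Gamma\vdash\{A\}\cup\Delta$;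 and $\Gamma\vdash\{\neg A\}\cup\Delta$ iff $\Gamma\cup\{A\}\vdash\Delta$. *)

theory Defs
  imports Main
begin

definition mixed :: "'v set \<Rightarrow> 'v set \<Rightarrow> 'v set \<Rightarrow> 'v set \<Rightarrow> bool" where
  "mixed Dp Dc \<gamma> \<delta> \<longleftrightarrow> (\<gamma> \<subseteq> Dp \<longrightarrow> \<delta> \<inter> Dc \<noteq> {})"

definition designated :: "'v set \<Rightarrow> 'v \<Rightarrow> 'v \<Rightarrow> 'v set \<Rightarrow> bool" where
  "designated V one zero D \<longleftrightarrow> D \<subseteq> V \<and> one \<in> D \<and> zero \<notin> D"

definition representation ::
  "'v set \<Rightarrow> 'v \<Rightarrow> 'v \<Rightarrow> ('v set \<Rightarrow> 'v set \<Rightarrow> bool) \<Rightarrow> ('v set \<times> 'v set) list \<Rightarrow> bool" where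
  "representation V one zero R reps \<longleftrightarrow>
     reps \<noteq> [] \<and>
     (\<forall>(p, c) \<in> set reps. designated V one zero p \<and> designated V one zero c) \<and>
     (\<forall>\<gamma> \<delta>. \<gamma> \<subseteq> V \<longrightarrow> \<delta> \<subseteq> V \<longrightarrow>
        (R \<gamma> \<delta> \<longleftrightarrow> (\<forall>(p, c) \<in> set reps. mixed p c \<gamma> \<delta>)))"

definition intersective :: "'v set \<Rightarrow> 'v \<Rightarrow> 'v \<Rightarrow> ('v set \<Rightarrow> 'v set \<Rightarrow> bool) \<Rightarrow> bool" where
  "intersective V one zero R \<longleftrightarrow> (\<exists>reps. representation V one zero R reps)"

definition minimal_representation ::
  "'v set \<Rightarrow> 'v \<Rightarrow> 'v \<Rightarrow> ('v set \<Rightarrow> 'v set \<Rightarrow> bool) \<Rightarrow> ('v set \<times> 'v set) list \<Rightarrow> bool" where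
  "minimal_representation V one zero R reps \<longleftrightarrow>
     representation V one zero R reps \<and>
     (\<forall>reps'. representation V one zero R reps' \<longrightarrow> length reps \<le> length reps')"

datatype 'c fm = Atom nat | Conn 'c "'c fm list"

fun wff :: "('c \<Rightarrow> nat) \<Rightarrow> 'c fm \<Rightarrow> bool" where
  "wff ar (Atom n) = True"
| "wff ar (Conn c fs) = (length fs = ar c \<and> (\<forall>f \<in> set fs. wff ar f))"

fun eval :: "('c \<Rightarrow> 'v list \<Rightarrow> 'v) \<Rightarrow> (nat \<Rightarrow> 'v) \<Rightarrow> 'c fm \<Rightarrow> 'v" where
  "eval I v (Atom n) = v n"
| "eval I v (Conn c fs) = I c (map (eval I v) fs)"

definition valuation :: "'v set \<Rightarrow> (nat \<Rightarrow> 'v) \<Rightarrow> bool" where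
  "valuation V v \<longleftrightarrow> (\<forall>n. v n \<in> V)"

definition truth_functions :: "'v set \<Rightarrow> ('c \<Rightarrow> nat) \<Rightarrow> ('c \<Rightarrow> 'v list \<Rightarrow> 'v) \<Rightarrow> bool" where
  "truth_functions V ar I \<longleftrightarrow>
     (\<forall>c xs. length xs = ar c \<longrightarrow> set xs \<subseteq> V \<longrightarrow> I c xs \<in> V)"

definition constant_expressive :: "'v set \<Rightarrow> ('c \<Rightarrow> nat) \<Rightarrow> ('c \<Rightarrow> 'v list \<Rightarrow> 'v) \<Rightarrow> bool" where
  "constant_expressive V ar I \<longleftrightarrow>
     (\<forall>x \<in> V. \<exists>A. wff ar A \<and> (\<forall>v. valuation V v \<longrightarrow> eval I v A = x))"

definition conseq ::
  "'v set \<Rightarrow> ('c \<Rightarrow> 'v list \<Rightarrow> 'v) \<Rightarrow> ('v set \<Rightarrow> 'v set \<Rightarrow> bool) \<Rightarrow> 'c fm set \<Rightarrow> 'c fm set \<Rightarrow> bool" where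
  "conseq V I R \<Gamma> \<Delta> \<longleftrightarrow> (\<forall>v. valuation V v \<longrightarrow> R (eval I v ` \<Gamma>) (eval I v ` \<Delta>))"

definition G_negation ::
  "'v set \<Rightarrow> ('c \<Rightarrow> nat) \<Rightarrow> ('c \<Rightarrow> 'v list \<Rightarrow> 'v) \<Rightarrow> ('v set \<Rightarrow> 'v set \<Rightarrow> bool) \<Rightarrow> 'c \<Rightarrow> bool" where
  "G_negation V ar I R neg \<longleftrightarrow> ar neg = 1 \<and>
     (\<forall>\<Gamma> \<Delta> A. (\<forall>B \<in> \<Gamma>. wff ar B) \<longrightarrow> (\<forall>B \<in> \<Delta>. wff ar B) \<longrightarrow> wff ar A \<longrightarrow>
        (conseq V I R (\<Gamma> \<union> {Conn neg [A]}) \<Delta> \<longleftrightarrow> conseq V I R \<Gamma> ({A} \<union> \<Delta>)) \<and>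
        (conseq V I R \<Gamma> ({Conn neg [A]} \<union> \<Delta>) \<longleftrightarrow> conseq V I R (\<Gamma> \<union> {A}) \<Delta>))"

end

theory Submission
  imports Defs
begin

text \<open>Every component \<open>(Dp, Dc)\<close> of a minimal representation yields a counterexample
  \<open>(Dp, V - Dc)\<close> to \<open>\<Turnstile>\<close> that is maximal: enlarging its premises or its conclusions
  gives a valid pair, since otherwise some other component would subsume \<open>(Dp, Dc)\<close> and it
  could be dropped. Through constant formulas, the G-negation rules move a value \<open>a\<close> to the
  other side of \<open>\<Turnstile>\<close> as its negation \<open>\<not>a\<close>; applied to the maximal counterexample they show that
  \<open>\<not>x \<in> Dp \<longleftrightarrow> x \<notin> Dc\<close> and \<open>\<not>x \<in> Dc \<longleftrightarrow> x \<notin> Dp\<close>. Both conditions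
  follow: e.g. \<open>Dp\<^sup>i \<subseteq> Dp\<^sup>j\<close> forces \<open>Dc\<^sup>j \<subseteq> Dc\<^sup>i\<close>, so component \<open>i\<close> is
  subsumed by component \<open>j\<close>.\<close>

lemma mixed_antimono:
  assumes "mixed p' c' \<gamma> \<delta>" "p \<subseteq> p'" "c' \<subseteq> c"
  shows "mixed p c \<gamma> \<delta>"
  using assms unfolding mixed_def by blast

lemma minimal_representation_representation:
  "minimal_representation V one zero R reps \<Longrightarrow> representation V one zero R reps"
  unfolding minimal_representation_def by blast

lemma representation_component_subset:
  assumes "representation V one zero R reps" "(p, c) \<in> set reps"
  shows "p \<subseteq> V" "c \<subseteq> V"
  using assms unfolding representation_def designated_def by blast+

lemma representation_dominating_subset:
  assumes rep: "representation V one zero R reps"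
    and "reps' \<noteq> []" and sub: "set reps' \<subseteq> set reps"
    and dom: "\<And>p c. (p, c) \<in> set reps \<Longrightarrow> \<exists>p' c'. (p', c') \<in> set reps' \<and> p \<subseteq> p' \<and> c' \<subseteq> c"
  shows "representation V one zero R reps'"
proof -
  have same: "(\<forall>(p, c) \<in> set reps'. mixed p c \<gamma> \<delta>) \<longleftrightarrow> (\<forall>(p, c) \<in> set reps. mixed p c \<gamma> \<delta>)"
    for \<gamma> \<delta>
  proof
    assume valid': "\<forall>(p, c) \<in> set reps'. mixed p c \<gamma> \<delta>"
    show "\<forall>(p, c) \<in> set reps. mixed p c \<gamma> \<delta>"
    proof clarify
      fix p c assume "(p, c) \<in> set reps"
      then obtain p' c' where "(p', c') \<in> set reps'" "p \<subseteq> p'" "c' \<subseteq> c"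
        using dom by blast
      then show "mixed p c \<gamma> \<delta>"
        using valid' mixed_antimono by blast
    qed
  qed (use sub in blast)
  have "\<forall>(p, c) \<in> set reps'. designated V one zero p \<and> designated V one zero c"
    using rep sub unfolding representation_def by blast
  then show ?thesis
    using rep \<open>reps' \<noteq> []\<close> unfolding representation_def same by blast
qed

lemma minimal_representation_distinct:
  assumes "minimal_representation V one zero R reps"
  shows "distinct reps"
proof (rule ccontr)
  assume "\<not> distinct reps"
  then have shorter: "length (remdups reps) < length reps"
    using length_remdups_leq[of reps] length_remdups_eq[of reps] remdups_id_iff_distinct[of reps]
    by linarith
  have rep: "representation V one zero R reps"
    using assms by (rule minimal_representation_representation)
  then have "reps \<noteq> []"
    unfolding representation_def by blast
  then have "representation V one zero R (remdups reps)"
    by (intro representation_dominating_subset[OF rep]) auto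
  then show False
    using assms shorter unfolding minimal_representation_def by (meson leD)
qed

lemma minimal_representation_irredundant:
  assumes min: "minimal_representation V one zero R reps"
    and pc: "(p, c) \<in> set reps" and pc': "(p', c') \<in> set reps" "(p', c') \<noteq> (p, c)"
    and "p \<subseteq> p'" "c' \<subseteq> c"
  shows False
proof -
  let ?reps = "removeAll (p, c) reps"
  have rep: "representation V one zero R reps"
    using min by (rule minimal_representation_representation)
  have "(p', c') \<in> set ?reps"
    using pc' by simp
  moreover have "\<exists>p'' c''. (p'', c'') \<in> set ?reps \<and> q \<subseteq> p'' \<and> c'' \<subseteq> d"
    if "(q, d) \<in> set reps" for q d
  proof (cases "(q, d) = (p, c)")
    case True
    then show ?thesis
      using \<open>(p', c') \<in> set ?reps\<close> \<open>p \<subseteq> p'\<close> \<open>c' \<subseteq> c\<close> by blast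
  next
    case False
    then show ?thesis
      using that by auto
  qed
  ultimately have "representation V one zero R ?reps"
    using representation_dominating_subset[OF rep, of ?reps] by fastforce
  moreover have "length ?reps < length reps"
    using pc by (rule length_removeAll_less)
  ultimately show False
    using min unfolding minimal_representation_def by (meson leD)
qed

lemma representation_component_counterexample:
  assumes "representation V one zero R reps" "(p, c) \<in> set reps"
  shows "\<not> R p (V - c)"
proof -
  have "p \<subseteq> V"
    using representation_component_subset[OF assms] by blast
  moreover have "\<not> mixed p c p (V - c)"
    unfolding mixed_def by blast
  ultimately show ?thesis
    using assms unfolding representation_def by fastforce
qed

lemma minimal_representation_maximal_counterexample:
  assumes min: "minimal_representation V one zero R reps" and pc: "(p, c) \<in> set reps"
    and "\<gamma> \<subseteq> V" "\<delta> \<subseteq> V" "p \<subseteq> \<gamma>" "V - c \<subseteq> \<delta>" "\<not> R \<gamma> \<delta>"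
  shows "\<gamma> = p \<and> \<delta> = V - c"
proof -
  have rep: "representation V one zero R reps"
    using min by (rule minimal_representation_representation)
  then obtain p' c' where pc': "(p', c') \<in> set reps" and "\<not> mixed p' c' \<gamma> \<delta>"
    using assms unfolding representation_def by blast
  then have fail: "\<gamma> \<subseteq> p'" "\<delta> \<inter> c' = {}"
    unfolding mixed_def by auto
  have "c' \<subseteq> V"
    using representation_component_subset[OF rep pc'] by blast
  then have "p \<subseteq> p'" "c' \<subseteq> c"
    using fail assms by blast+
  then have "(p', c') = (p, c)"
    using minimal_representation_irredundant[OF min pc pc'] by blast
  then show ?thesis
    using fail assms by blast
qed

lemma minimal_representation_insert_premise:
  assumes min: "minimal_representation V one zero R reps" and pc: "(p, c) \<in> set reps"
    and "y \<in> V"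
  shows "R (insert y p) (V - c) \<longleftrightarrow> y \<notin> p"
proof
  assume "R (insert y p) (V - c)"
  then show "y \<notin> p"
    using representation_component_counterexample[OF minimal_representation_representation[OF min] pc]
    by (metis insert_absorb)
next
  assume "y \<notin> p"
  have "insert y p \<subseteq> V"
    using representation_component_subset[OF minimal_representation_representation[OF min] pc]
      \<open>y \<in> V\<close> by blast
  then show "R (insert y p) (V - c)"
    using minimal_representation_maximal_counterexample[OF min pc, of "insert y p" "V - c"]
      \<open>y \<notin> p\<close> by blast
qed

lemma minimal_representation_insert_conclusion:
  assumes min: "minimal_representation V one zero R reps" and pc: "(p, c) \<in> set reps"
    and "y \<in> V"
  shows "R p (insert y (V - c)) \<longleftrightarrow> y \<in> c"
proof
  assume "R p (insert y (V - c))"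
  then show "y \<in> c"
    using representation_component_counterexample[OF minimal_representation_representation[OF min] pc]
      \<open>y \<in> V\<close> by (metis Diff_iff insert_absorb)
next
  assume "y \<in> c"
  have "p \<subseteq> V"
    using representation_component_subset[OF minimal_representation_representation[OF min] pc]
    by blast
  then show "R p (insert y (V - c))"
    using minimal_representation_maximal_counterexample[OF min pc, of p "insert y (V - c)"]
      \<open>y \<in> V\<close> \<open>y \<in> c\<close> by blast
qed

text \<open>The G-negation rules read on truth values, with \<open>n\<close> the truth function of the negation.\<close>
definition truth_negation :: "'v set \<Rightarrow> ('v set \<Rightarrow> 'v set \<Rightarrow> bool) \<Rightarrow> ('v \<Rightarrow> 'v) \<Rightarrow> bool" where
  "truth_negation V R n \<longleftrightarrow>
     (\<forall>a \<in> V. n a \<in> V \<and> (\<forall>\<gamma> \<delta>. \<gamma> \<subseteq> V \<longrightarrow> \<delta> \<subseteq> V \<longrightarrow>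
        (R (insert (n a) \<gamma>) \<delta> \<longleftrightarrow> R \<gamma> (insert a \<delta>)) \<and>
        (R \<gamma> (insert (n a) \<delta>) \<longleftrightarrow> R (insert a \<gamma>) \<delta>)))"

lemma constant_expressiveE:
  assumes "constant_expressive V ar I"
  obtains \<kappa> where "\<And>x. x \<in> V \<Longrightarrow> wff ar (\<kappa> x)"
    and "\<And>x v. x \<in> V \<Longrightarrow> valuation V v \<Longrightarrow> eval I v (\<kappa> x) = x"
  using assms unfolding constant_expressive_def by metis

lemma conseq_constant:
  assumes "V \<noteq> {}" and "\<And>v. valuation V v \<Longrightarrow> eval I v ` \<Gamma> = \<gamma> \<and> eval I v ` \<Delta> = \<delta>"
  shows "conseq V I R \<Gamma> \<Delta> \<longleftrightarrow> R \<gamma> \<delta>"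
proof -
  obtain x where "x \<in> V"
    using assms(1) by blast
  then have "valuation V (\<lambda>_. x)"
    unfolding valuation_def by blast
  then show ?thesis
    unfolding conseq_def using assms(2) by metis
qed

lemma G_negation_truth_negation:
  assumes "V \<noteq> {}" and tf: "truth_functions V ar I" and ce: "constant_expressive V ar I"
    and G: "G_negation V ar I R neg"
  shows "truth_negation V R (\<lambda>a. I neg [a])"
proof -
  obtain \<kappa> where wff: "\<And>x. x \<in> V \<Longrightarrow> wff ar (\<kappa> x)"
    and \<kappa>: "\<And>x v. x \<in> V \<Longrightarrow> valuation V v \<Longrightarrow> eval I v (\<kappa> x) = x"
    using constant_expressiveE[OF ce] by blast
  have image: "eval I v ` \<kappa> ` \<gamma> = \<gamma>" if "\<gamma> \<subseteq> V" "valuation V v" for \<gamma> v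
    using that \<kappa> by (force simp: image_image)
  have ar_neg: "ar neg = 1"
    using G unfolding G_negation_def by blast
  have laws: "(R (insert (I neg [a]) \<gamma>) \<delta> \<longleftrightarrow> R \<gamma> (insert a \<delta>)) \<and>
              (R \<gamma> (insert (I neg [a]) \<delta>) \<longleftrightarrow> R (insert a \<gamma>) \<delta>)"
    if a: "a \<in> V" and "\<gamma> \<subseteq> V" "\<delta> \<subseteq> V" for a \<gamma> \<delta>
  proof -
    have neg: "eval I v (Conn neg [\<kappa> a]) = I neg [a]" and val: "eval I v (\<kappa> a) = a"
      if "valuation V v" for v
      using \<kappa>[OF a that] by simp_all
    have "conseq V I R (\<kappa> ` \<gamma> \<union> {Conn neg [\<kappa> a]}) (\<kappa> ` \<delta>) \<longleftrightarrow> R (insert (I neg [a]) \<gamma>) \<delta>"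
      "conseq V I R (\<kappa> ` \<gamma>) ({\<kappa> a} \<union> \<kappa> ` \<delta>) \<longleftrightarrow> R \<gamma> (insert a \<delta>)"
      "conseq V I R (\<kappa> ` \<gamma>) ({Conn neg [\<kappa> a]} \<union> \<kappa> ` \<delta>) \<longleftrightarrow> R \<gamma> (insert (I neg [a]) \<delta>)"
      "conseq V I R (\<kappa> ` \<gamma> \<union> {\<kappa> a}) (\<kappa> ` \<delta>) \<longleftrightarrow> R (insert a \<gamma>) \<delta>"
      by (rule conseq_constant[OF \<open>V \<noteq> {}\<close>];
          simp add: image \<open>\<gamma> \<subseteq> V\<close> \<open>\<delta> \<subseteq> V\<close> neg val)+
    moreover have "wff ar (Conn neg [\<kappa> a])" "\<forall>B \<in> \<kappa> ` \<gamma>. wff ar B" "\<forall>B \<in> \<kappa> ` \<delta>. wff ar B"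
      using wff a ar_neg \<open>\<gamma> \<subseteq> V\<close> \<open>\<delta> \<subseteq> V\<close> by auto
    ultimately show ?thesis
      using G wff[OF a] unfolding G_negation_def by metis
  qed
  have "I neg [a] \<in> V" if "a \<in> V" for a
    using tf that ar_neg unfolding truth_functions_def by simp
  then show ?thesis
    unfolding truth_negation_def using laws by blast
qed

definition negation_dual :: "('v \<Rightarrow> 'v) \<Rightarrow> 'v set \<Rightarrow> 'v set \<Rightarrow> 'v set \<Rightarrow> bool" where
  "negation_dual n V p c \<longleftrightarrow> (\<forall>x \<in> V. (n x \<in> p \<longleftrightarrow> x \<notin> c) \<and> (n x \<in> c \<longleftrightarrow> x \<notin> p))"

lemma negation_dual_commute: "negation_dual n V p c \<longleftrightarrow> negation_dual n V c p"
  unfolding negation_dual_def by blast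

lemma negation_dual_transfer:
  assumes "negation_dual n V a b" "negation_dual n V a' b'" "b' \<subseteq> V" "a \<subseteq> a'"
  shows "b' \<subseteq> b"
  using assms unfolding negation_dual_def by blast

lemma minimal_representation_negation_dual:
  assumes min: "minimal_representation V one zero R reps" and pc: "(p, c) \<in> set reps"
    and "truth_negation V R n"
  shows "negation_dual n V p c"
  unfolding negation_dual_def
proof
  fix x assume x: "x \<in> V"
  have "p \<subseteq> V"
    using representation_component_subset[OF minimal_representation_representation[OF min] pc]
    by blast
  then have "(R (insert (n x) p) (V - c) \<longleftrightarrow> R p (insert x (V - c))) \<and>
             (R p (insert (n x) (V - c)) \<longleftrightarrow> R (insert x p) (V - c)) \<and> n x \<in> V"
    using \<open>truth_negation V R n\<close> x unfolding truth_negation_def by blast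
  then show "(n x \<in> p \<longleftrightarrow> x \<notin> c) \<and> (n x \<in> c \<longleftrightarrow> x \<notin> p)"
    using x minimal_representation_insert_premise[OF min pc]
      minimal_representation_insert_conclusion[OF min pc] by blast
qed

lemma minimal_representation_incomparable:
  assumes min: "minimal_representation V one zero R reps" and "truth_negation V R n"
    and pc: "(p, c) \<in> set reps" and pc': "(p', c') \<in> set reps" "(p', c') \<noteq> (p, c)"
  shows "\<not> p \<subseteq> p'" "\<not> c \<subseteq> c'"
proof -
  have dual: "negation_dual n V p c" "negation_dual n V p' c'"
    using minimal_representation_negation_dual[OF min pc \<open>truth_negation V R n\<close>]
      minimal_representation_negation_dual[OF min pc'(1) \<open>truth_negation V R n\<close>] .
  have in_V: "p' \<subseteq> V" "c' \<subseteq> V"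
    using representation_component_subset[OF minimal_representation_representation[OF min] pc'(1)] .
  show "\<not> p \<subseteq> p'"
  proof
    assume "p \<subseteq> p'"
    then have "c' \<subseteq> c"
      by (rule negation_dual_transfer[OF dual in_V(2)])
    then show False
      using minimal_representation_irredundant[OF min pc pc' \<open>p \<subseteq> p'\<close>] by blast
  qed
  show "\<not> c \<subseteq> c'"
  proof
    assume "c \<subseteq> c'"
    then have "p' \<subseteq> p"
      by (rule negation_dual_transfer[OF dual[THEN negation_dual_commute[THEN iffD1]] in_V(1)])
    then show False
      using minimal_representation_irredundant[OF min pc'(1) pc _ \<open>p' \<subseteq> p\<close> \<open>c \<subseteq> c'\<close>] pc'(2)
      by argo
  qed
qed

lemma minimal_representation_dual_inclusion:
  assumes min: "minimal_representation V one zero R reps" and "truth_negation V R n"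
    and pc: "(p, c) \<in> set reps" and pc': "(p', c') \<in> set reps"
  shows "p \<subseteq> c' \<Longrightarrow> p' \<subseteq> c" "c' \<subseteq> p \<Longrightarrow> c \<subseteq> p'"
proof -
  have dual: "negation_dual n V p c" "negation_dual n V c' p'"
    using minimal_representation_negation_dual[OF min pc \<open>truth_negation V R n\<close>]
      minimal_representation_negation_dual[OF min pc' \<open>truth_negation V R n\<close>,
        THEN negation_dual_commute[THEN iffD1]] .
  have in_V: "p' \<subseteq> V" "c \<subseteq> V"
    using representation_component_subset[OF minimal_representation_representation[OF min] pc']
      representation_component_subset[OF minimal_representation_representation[OF min] pc]
    by blast+
  show "p \<subseteq> c' \<Longrightarrow> p' \<subseteq> c"
    using negation_dual_transfer[OF dual in_V(1)] .
  show "c' \<subseteq> p \<Longrightarrow> c \<subseteq> p'"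
    using negation_dual_transfer[OF dual(2,1) in_V(2)] .
qed

theorem theorem7p8:
  fixes V :: "'v set" and one zero :: 'v
    and R :: "'v set \<Rightarrow> 'v set \<Rightarrow> bool"
    and ar :: "'c \<Rightarrow> nat" and I :: "'c \<Rightarrow> 'v list \<Rightarrow> 'v" and neg :: 'c
    and reps :: "('v set \<times> 'v set) list"
  assumes "finite V" and "one \<in> V" and "zero \<in> V" and "one \<noteq> zero"
    and "truth_functions V ar I"
    and "constant_expressive V ar I"
    and "intersective V one zero R"
    and "G_negation V ar I R neg"
    and "minimal_representation V one zero R reps"
  shows "(\<forall>i < length reps. \<forall>j < length reps. i \<noteq> j \<longrightarrow>
            \<not> fst (reps ! i) \<subseteq> fst (reps ! j) \<and> \<not> snd (reps ! i) \<subseteq> snd (reps ! j))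
       \<and> (\<forall>i < length reps. \<forall>j < length reps.
            (fst (reps ! i) \<subseteq> snd (reps ! j) \<longrightarrow> fst (reps ! j) \<subseteq> snd (reps ! i)) \<and>
            (snd (reps ! j) \<subseteq> fst (reps ! i) \<longrightarrow> snd (reps ! i) \<subseteq> fst (reps ! j)))"
proof -
  note min = \<open>minimal_representation V one zero R reps\<close>
  have "V \<noteq> {}"
    using \<open>one \<in> V\<close> by blast
  then have neg: "truth_negation V R (\<lambda>a. I neg [a])"
    using \<open>truth_functions V ar I\<close> \<open>constant_expressive V ar I\<close> \<open>G_negation V ar I R neg\<close>
    by (rule G_negation_truth_negation)
  have component: "(fst (reps ! i), snd (reps ! i)) \<in> set reps" if "i < length reps" for i
    using that by simp
  have N1: "\<not> fst (reps ! i) \<subseteq> fst (reps ! j) \<and> \<not> snd (reps ! i) \<subseteq> snd (reps ! j)"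
    if "i < length reps" "j < length reps" "i \<noteq> j" for i j
  proof -
    have "(fst (reps ! j), snd (reps ! j)) \<noteq> (fst (reps ! i), snd (reps ! i))"
      using minimal_representation_distinct[OF min] that by (simp add: nth_eq_iff_index_eq)
    then show ?thesis
      using minimal_representation_incomparable[OF min neg component component] that by blast
  qed
  have N2: "(fst (reps ! i) \<subseteq> snd (reps ! j) \<longrightarrow> fst (reps ! j) \<subseteq> snd (reps ! i)) \<and>
            (snd (reps ! j) \<subseteq> fst (reps ! i) \<longrightarrow> snd (reps ! i) \<subseteq> fst (reps ! j))"
    if "i < length reps" "j < length reps" for i j
    using minimal_representation_dual_inclusion[OF min neg component component] that by blast
  show ?thesis
    using N1 N2 by blast
qed

end
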